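(* Consider the $nm$ iterations $(i,j)$, $1\le i\le n$, $1\le j\le m$, of the Triangular Basis Algorithm, each viewed as an atomic transformation of the full state (the $x_j$, $\mathrm{used}_j$, $av_i$, $b_i$). Equip the index set with the partial order $(i,j)\le(k,l)\iff i\le k \text{ and } j\le l$. Then for every total ordering of the iterations that extends this partial order (i.e. $(i,j)$ is executed before $(k,l)$ whenever $(i,j)<(k,l)$), executing the iterations in that order from the initial state produces the same final state as the standard lexicographic execution order. In particular, all iterations $(i,j)$ with a fixed value of $i+j$ may be executed in any order (in parallel).
   Context: All arithmetic is over $\mathbb{F}_2$ ($+$ is XOR, $\wedge$ is AND). For a vector $v\in\{0,1\}^n$, $v[i]$ is its $i$-th bit and $v[a..b]$ the substring of bits $a$ through $b$ (empty if $a>b$). Triangular Basis Algorithm. Input: $x_1,\dots,x_m\in\{0,1\}^n$ (modified in place). Auxiliary variables: bits $\mathrm{used}_j$ ($1\le j\le m$) initialized to $0$; bits $av_i$ ($1\le i\le n$) initialized to $1$; strings $b_i[(i+1)..n]$ ($1\le i\le n$) initialized to all zeros. The algorithm executes, for $i=1,\dots,n$ (outer loop) and, inside it, for $j=1,\dots,m$ (inner loop), the following four steps in order (iteration $(i,j)$): (1) $\mathrm{used}_j \leftarrow \mathrm{used}_j + (x_j[i]\wedge av_i)$; (2) $av_i\leftarrow av_i + (x_j[i]\wedge \mathrm{used}_j)$ (using the value of $\mathrm{used}_j$ just updated); (3) if $\mathrm{used}_j=1$: $b_i[(i+1)..n]\leftarrow b_i[(i+1)..n]+x_j[(i+1)..n]$;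 (4) if $x_j[i]=1$: $x_j[(i+1)..n]\leftarrow x_j[(i+1)..n]+b_i[(i+1)..n]$. *)

theory Defs
  imports Main
begin

text \<open>Bits of F_2 are modelled as bool; addition in F_2 is XOR, written here as bxor.\<close>

definition bxor :: "bool \<Rightarrow> bool \<Rightarrow> bool" where
  "bxor a b \<longleftrightarrow> a \<noteq> b"

text \<open>Full state of the Triangular Basis Algorithm.
  xs j i = bit i of vector x_j;  used j = used_j;  av i = av_i;  bs i k = bit k of b_i
  (only k in (i+1)..n is meaningful).\<close>

record tb_state =
  xs   :: "nat \<Rightarrow> nat \<Rightarrow> bool"
  used :: "nat \<Rightarrow> bool"
  av   :: "nat \<Rightarrow> bool"
  bs   :: "nat \<Rightarrow> nat \<Rightarrow> bool"

definition tb_init :: "(nat \<Rightarrow> nat \<Rightarrow> bool) \<Rightarrow> tb_state" where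
  "tb_init x = \<lparr> xs = x, used = (\<lambda>_. False), av = (\<lambda>_. True), bs = (\<lambda>_ _. False) \<rparr>"

definition tb_step :: "nat \<Rightarrow> nat \<times> nat \<Rightarrow> tb_state \<Rightarrow> tb_state" where
  "tb_step n ij s =
    (let i = fst ij; j = snd ij;
         xji = xs s j i;
         u' = bxor (used s j) (xji \<and> av s i);
         a' = bxor (av s i) (xji \<and> u');
         bi' = (\<lambda>k. if u' \<and> i + 1 \<le> k \<and> k \<le> n then bxor (bs s i k) (xs s j k) else bs s i k);
         xj' = (\<lambda>k. if xji \<and> i + 1 \<le> k \<and> k \<le> n then bxor (xs s j k) (bi' k) else xs s j k)
     in \<lparr> xs = (xs s)(j := xj'), used = (used s)(j := u'),
          av = (av s)(i := a'), bs = (bs s)(i := bi') \<rparr>)"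

definition tb_run :: "nat \<Rightarrow> (nat \<times> nat) list \<Rightarrow> tb_state \<Rightarrow> tb_state" where
  "tb_run n ord s = fold (tb_step n) ord s"

definition lex_order :: "nat \<Rightarrow> nat \<Rightarrow> (nat \<times> nat) list" where
  "lex_order n m = concat (map (\<lambda>i. map (\<lambda>j. (i, j)) [1..<m+1]) [1..<n+1])"

definition linear_extension :: "nat \<Rightarrow> nat \<Rightarrow> (nat \<times> nat) list \<Rightarrow> bool" where
  "linear_extension n m ord \<longleftrightarrow>
     distinct ord \<and> set ord = {1..n} \<times> {1..m} \<and>
     (\<forall>a < length ord. \<forall>b < length ord.
        fst (ord ! a) \<le> fst (ord ! b) \<and> snd (ord ! a) \<le> snd (ord ! b) \<and> ord ! a \<noteq> ord ! b
        \<longrightarrow> a < b)"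

end

theory Submission
  imports Defs "HOL-Library.Product_Order"
begin

text \<open>Iteration \<open>(i, j)\<close> reads and writes only \<open>x\<^sub>j\<close>, \<open>used\<^sub>j\<close>, \<open>av\<^sub>i\<close> and \<open>b\<^sub>i\<close>, so two
  iterations sharing neither index commute; two iterations that are incomparable in the
  product order share neither index. In both a linear extension and the lexicographic
  order no iteration comes after one that strictly dominates it, and any two duplicate-free
  enumerations of the same set with this property differ only by reordering such commuting
  pairs.\<close>

lemma fold_eq_if_sorted_wrt_commuting:
  assumes comm: "\<And>a b. R a b \<Longrightarrow> R b a \<Longrightarrow> a \<noteq> b \<Longrightarrow> f a \<circ> f b = f b \<circ> f a"
  shows "distinct zs \<Longrightarrow> distinct ws \<Longrightarrow> set zs = set ws
    \<Longrightarrow> sorted_wrt R zs \<Longrightarrow> sorted_wrt R ws \<Longrightarrow> fold f zs = fold f ws"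
proof (induction zs arbitrary: ws)
  case Nil
  then show ?case by simp
next
  case (Cons x zs)
  obtain p q where ws: "ws = p @ x # q"
    using Cons.prems(3) by (metis list.set_intros(1) split_list)
  have x_commutes_with_p: "f x \<circ> f y = f y \<circ> f x" if "y \<in> set p" for y
  proof (rule comm)
    show "R y x" "x \<noteq> y"
      using Cons.prems(2,5) that unfolding ws by (auto simp: sorted_wrt_append)
    then show "R x y"
      using Cons.prems(3,4) that unfolding ws by auto
  qed
  have "fold f zs = fold f (p @ q)"
    using Cons.prems unfolding ws by (intro Cons.IH) (auto simp: sorted_wrt_append)
  then have "fold f (x # zs) = fold f q \<circ> fold f p \<circ> f x"
    by simp
  also have "\<dots> = fold f q \<circ> f x \<circ> fold f p"
    using fold_commute[of p "f x" f f] x_commutes_with_p by (simp add: comp_assoc)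
  finally show ?case
    unfolding ws by simp
qed

lemma tb_step_commute:
  assumes "fst a \<noteq> fst b" "snd a \<noteq> snd b"
  shows "tb_step n a \<circ> tb_step n b = tb_step n b \<circ> tb_step n a"
  using assms by (cases a; cases b) (simp add: fun_eq_iff tb_step_def Let_def fun_upd_twist)

lemma tb_step_commute_if_incomparable:
  fixes a b :: "nat \<times> nat"
  assumes "\<not> b < a" "\<not> a < b" "a \<noteq> b"
  shows "tb_step n a \<circ> tb_step n b = tb_step n b \<circ> tb_step n a"
  using assms by (intro tb_step_commute) (auto simp: less_prod_def less_eq_prod_def prod_eq_iff)

lemma linear_extension_sorted_wrt:
  assumes "linear_extension n m ord"
  shows "sorted_wrt (\<lambda>u v. \<not> v < u) ord"
  unfolding sorted_wrt_iff_nth_less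
proof (intro allI impI notI)
  fix i j assume "i < j" "j < length ord" "ord ! j < ord ! i"
  then have "ord ! j \<le> ord ! i" "ord ! j \<noteq> ord ! i"
    by auto
  with \<open>i < j\<close> \<open>j < length ord\<close> have "j < i"
    using assms unfolding linear_extension_def less_eq_prod_def by auto
  with \<open>i < j\<close> show False by simp
qed

lemma lex_order_0: "lex_order 0 m = []"
  unfolding lex_order_def by simp

lemma lex_order_Suc:
  "lex_order (Suc n) m = lex_order n m @ map (\<lambda>j. (Suc n, j)) [1..<m+1]"
  unfolding lex_order_def by simp

lemma set_lex_order: "set (lex_order n m) = {1..n} \<times> {1..m}"
  by (induction n) (auto simp: lex_order_0 lex_order_Suc le_Suc_eq)

lemma distinct_lex_order: "distinct (lex_order n m)"
  by (induction n) (auto simp: lex_order_0 lex_order_Suc set_lex_order distinct_map inj_on_def)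

lemma lex_order_sorted_wrt: "sorted_wrt (\<lambda>u v. \<not> v < u) (lex_order n m)"
proof (induction n)
  case 0
  then show ?case by (simp add: lex_order_0)
next
  case (Suc n)
  then show ?case
    by (auto simp: lex_order_Suc set_lex_order sorted_wrt_append sorted_wrt_map less_prod_def
        less_eq_prod_def intro: sorted_wrt_mono_rel[OF _ sorted_wrt_upt])
qed

theorem mainTheorem4:
  fixes n m :: nat and x :: "nat \<Rightarrow> nat \<Rightarrow> bool" and ord :: "(nat \<times> nat) list"
  assumes "linear_extension n m ord"
  shows "tb_run n ord (tb_init x) = tb_run n (lex_order n m) (tb_init x)"
proof -
  have "fold (tb_step n) ord = fold (tb_step n) (lex_order n m)"
  proof (rule fold_eq_if_sorted_wrt_commuting[OF tb_step_commute_if_incomparable])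
    show "distinct ord" "set ord = set (lex_order n m)"
      using assms by (auto simp: linear_extension_def set_lex_order)
    show "sorted_wrt (\<lambda>u v. \<not> v < u) ord"
      using assms by (rule linear_extension_sorted_wrt)
  qed (simp_all add: distinct_lex_order lex_order_sorted_wrt)
  then show ?thesis
    unfolding tb_run_def by simp
qed

end
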